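(* Let $R$ be a Noetherian ring and $\Gamma$ a finitely generated group with a word metric. Let $\phi\colon F\to F'$ be an $R[\Gamma]$-homomorphism between finitely generated $R[\Gamma]$-modules, and let $\Sigma_F$, $\Sigma_{F'}$ be arbitrary finite generating sets of $F$ and $F'$. Then $\phi$ is boundedly controlled as an $R$-linear homomorphism of $\Gamma$-filtered $R$-modules $s(F,\Sigma_F)\to s(F',\Sigma_{F'})$.
   Context: For a subset $S\subset\Gamma$ and $b\ge0$, $S[b]$ is the metric $b$-enlargement of $S$ in the word metric. A $\Gamma$-filtered $R$-module is an $R$-module $F$ with an inclusion-preserving assignment $S\mapsto F(S)$ of $R$-submodules to subsets $S\subset\Gamma$ with $F(\Gamma)=F$. For a finitely generated $R[\Gamma]$-module $F$ with finite generating set $\Sigma$, $s(F,\Sigma)$ is the $\Gamma$-filtered $R$-module with $F(S)$ the $R$-submodule generated by $\{s\sigma : s\in S,\ \sigma\in\Sigma\}$. An $R$-homomorphism $f\colon F\to F'$ of filtered modules is boundedly controlled if there is $b\ge 0$ with $f(F(S))\subset F'(S[b])$ for all $S\subset\Gamma$. *)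

theory Defs
  imports Complex_Main HOL.Modules "HOL-Algebra.Generated_Groups"
begin

text \<open>A commutative ring is Noetherian if every ideal is finitely generated.
  Ideals of the ring 'r are the submodules of 'r over itself.\<close>
definition noetherian_ring :: "'r::comm_ring_1 itself \<Rightarrow> bool" where
  "noetherian_ring _ \<longleftrightarrow>
     (\<forall>I::'r set. Modules.module.subspace ((*)::'r \<Rightarrow> 'r \<Rightarrow> 'r) I \<longrightarrow>
        (\<exists>B. finite B \<and> Modules.module.span ((*)::'r \<Rightarrow> 'r \<Rightarrow> 'r) B = I))"

definition word_length :: "('g, 'b) monoid_scheme \<Rightarrow> 'g set \<Rightarrow> 'g \<Rightarrow> nat" where
  "word_length G A g = (LEAST n. \<exists>ws. length ws = n \<and>
      set ws \<subseteq> A \<union> m_inv G ` A \<and> g = foldr (mult G) ws (one G))"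

definition word_dist :: "('g, 'b) monoid_scheme \<Rightarrow> 'g set \<Rightarrow> 'g \<Rightarrow> 'g \<Rightarrow> nat" where
  "word_dist G A g h = word_length G A (mult G (m_inv G g) h)"

definition enlarge :: "('g, 'b) monoid_scheme \<Rightarrow> 'g set \<Rightarrow> 'g set \<Rightarrow> real \<Rightarrow> 'g set" where
  "enlarge G A S b = {h \<in> carrier G. \<exists>s\<in>S. real (word_dist G A s h) \<le> b}"

text \<open>An R[Gamma]-module: an R-module with a Gamma-action by R-linear maps.\<close>
definition group_ring_module ::
  "('g, 'b) monoid_scheme \<Rightarrow> ('r::comm_ring_1 \<Rightarrow> 'm::ab_group_add \<Rightarrow> 'm) \<Rightarrow> ('g \<Rightarrow> 'm \<Rightarrow> 'm) \<Rightarrow> bool" where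
  "group_ring_module G scale act \<longleftrightarrow>
     Modules.module scale \<and>
     (\<forall>x. act (one G) x = x) \<and>
     (\<forall>g\<in>carrier G. \<forall>h\<in>carrier G. \<forall>x. act (mult G g h) x = act g (act h x)) \<and>
     (\<forall>g\<in>carrier G. \<forall>x y. act g (x + y) = act g x + act g y) \<and>
     (\<forall>g\<in>carrier G. \<forall>r x. act g (scale r x) = scale r (act g x))"

definition group_ring_hom ::
  "('g, 'b) monoid_scheme \<Rightarrow> ('r::comm_ring_1 \<Rightarrow> 'm::ab_group_add \<Rightarrow> 'm) \<Rightarrow> ('g \<Rightarrow> 'm \<Rightarrow> 'm)
     \<Rightarrow> ('r \<Rightarrow> 'n::ab_group_add \<Rightarrow> 'n) \<Rightarrow> ('g \<Rightarrow> 'n \<Rightarrow> 'n) \<Rightarrow> ('m \<Rightarrow> 'n) \<Rightarrow> bool" where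
  "group_ring_hom G scale act scale' act' f \<longleftrightarrow>
     (\<forall>x y. f (x + y) = f x + f y) \<and>
     (\<forall>r x. f (scale r x) = scale' r (f x)) \<and>
     (\<forall>g\<in>carrier G. \<forall>x. f (act g x) = act' g (f x))"

text \<open>The Gamma-filtered R-module s(F,Sigma): F(S) is the R-submodule generated by
  s sigma with s in S and sigma in Sigma.\<close>
definition std_filtration ::
  "('g, 'b) monoid_scheme \<Rightarrow> ('r::comm_ring_1 \<Rightarrow> 'm::ab_group_add \<Rightarrow> 'm) \<Rightarrow> ('g \<Rightarrow> 'm \<Rightarrow> 'm)
     \<Rightarrow> 'm set \<Rightarrow> 'g set \<Rightarrow> 'm set" where
  "std_filtration G scale act \<Sigma> S =
     Modules.module.span scale {act s \<sigma> | s \<sigma>. s \<in> S \<and> s \<in> carrier G \<and> \<sigma> \<in> \<Sigma>}"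

definition boundedly_controlled ::
  "('g, 'b) monoid_scheme \<Rightarrow> 'g set \<Rightarrow> ('g set \<Rightarrow> 'm set) \<Rightarrow> ('g set \<Rightarrow> 'n set) \<Rightarrow> ('m \<Rightarrow> 'n) \<Rightarrow> bool" where
  "boundedly_controlled G A F F' f \<longleftrightarrow>
     (\<exists>b::real. b \<ge> 0 \<and> (\<forall>S. S \<subseteq> carrier G \<longrightarrow> f ` F S \<subseteq> F' (enlarge G A S b)))"

end

theory Submission
  imports Defs
begin

text \<open>Since the translates of \<open>\<Sigma>F'\<close> span \<open>F'\<close>, the finitely many elements
  \<open>\<phi> \<sigma>\<close>, \<open>\<sigma> \<in> \<Sigma>F\<close>, lie in \<open>F'(K)\<close> for a finite \<open>K \<subseteq> \<Gamma>\<close>. By equivariance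
  \<open>\<phi>\<close> maps \<open>s\<sigma>\<close> into \<open>F'(sK)\<close>, and by left invariance of the word metric \<open>sK\<close>
  lies within distance \<open>b = max {|k| : k \<in> K}\<close> of \<open>s\<close>.\<close>

lemma (in module) span_finite_subset:
  assumes "x \<in> span S"
  obtains T where "finite T" "T \<subseteq> S" "x \<in> span T"
proof -
  from assms obtain T r where "finite T" "T \<subseteq> S" "x = (\<Sum>a\<in>T. r a *s a)"
    unfolding span_explicit by blast
  moreover have "(\<Sum>a\<in>T. r a *s a) \<in> span T"
    by (intro span_sum span_scale span_base)
  ultimately show thesis using that by blast
qed

lemma (in module) finite_subset_span_finite_subset:
  assumes "finite X" "X \<subseteq> span S"
  obtains T where "finite T" "T \<subseteq> S" "X \<subseteq> span T"
  using assms
proof (induction X arbitrary: thesis rule: finite_induct)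
  case empty
  show ?case by (rule empty.prems(1)[of "{}"]) auto
next
  case (insert x X)
  obtain T where T: "finite T" "T \<subseteq> S" "X \<subseteq> span T"
    using insert.IH insert.prems(2) by blast
  obtain T' where T': "finite T'" "T' \<subseteq> S" "x \<in> span T'"
    using span_finite_subset insert.prems(2) by blast
  have "insert x X \<subseteq> span (T \<union> T')"
    using T(3) T'(3) span_mono[of T "T \<union> T'"] span_mono[of T' "T \<union> T'"] by auto
  with T T' show ?case by (intro insert.prems(1)) auto
qed

lemma group_ring_module_module: "group_ring_module G scale act \<Longrightarrow> module scale"
  by (simp add: group_ring_module_def)

lemma group_ring_module_act_hom:
  "group_ring_module G scale act \<Longrightarrow> g \<in> carrier G \<Longrightarrow> module_hom scale scale (act g)"
  by (simp add: group_ring_module_def module_hom_iff)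

lemma group_ring_hom_module_hom:
  "group_ring_module G scale act \<Longrightarrow> group_ring_module G scale' act'
    \<Longrightarrow> group_ring_hom G scale act scale' act' f \<Longrightarrow> module_hom scale scale' f"
  by (simp add: group_ring_module_def group_ring_hom_def module_hom_iff)

lemma std_filtration_mono:
  "module scale \<Longrightarrow> S \<subseteq> S'
    \<Longrightarrow> std_filtration G scale act \<Sigma> S \<subseteq> std_filtration G scale act \<Sigma> S'"
  unfolding std_filtration_def by (rule module.span_mono) blast+

lemma std_filtration_subspace:
  "module scale \<Longrightarrow> module.subspace scale (std_filtration G scale act \<Sigma> S)"
  unfolding std_filtration_def by (rule module.subspace_span)

lemma std_filtration_finite_support:
  assumes "module scale" "std_filtration G scale act \<Sigma> (carrier G) = UNIV" "finite X"
  obtains K where "finite K" "K \<subseteq> carrier G" "X \<subseteq> std_filtration G scale act \<Sigma> K"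
proof -
  interpret module scale by fact
  let ?gens = "{act s \<sigma> | s \<sigma>. s \<in> carrier G \<and> s \<in> carrier G \<and> \<sigma> \<in> \<Sigma>}"
  obtain T where T: "finite T" "T \<subseteq> ?gens" "X \<subseteq> span T"
    using finite_subset_span_finite_subset[OF assms(3)] assms(2)
    unfolding std_filtration_def by blast
  then have "\<forall>t\<in>T. \<exists>g. g \<in> carrier G \<and> (\<exists>\<sigma>\<in>\<Sigma>. t = act g \<sigma>)"
    by blast
  then obtain elt where elt: "\<And>t. t \<in> T \<Longrightarrow> elt t \<in> carrier G \<and> (\<exists>\<sigma>\<in>\<Sigma>. t = act (elt t) \<sigma>)"
    by metis
  have "T \<subseteq> {act s \<sigma> | s \<sigma>. s \<in> elt ` T \<and> s \<in> carrier G \<and> \<sigma> \<in> \<Sigma>}"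
    using elt by blast
  then have "X \<subseteq> std_filtration G scale act \<Sigma> (elt ` T)"
    unfolding std_filtration_def using T(3) span_mono by blast
  with T(1) elt show thesis by (intro that) auto
qed

lemma act_std_filtration:
  assumes "monoid G" "group_ring_module G scale act" "g \<in> carrier G" "K \<subseteq> carrier G"
  shows "act g ` std_filtration G scale act \<Sigma> K
           = std_filtration G scale act \<Sigma> ((\<otimes>\<^bsub>G\<^esub>) g ` K)"
proof -
  interpret module_hom scale scale "act g"
    using group_ring_module_act_hom[OF assms(2,3)] .
  have "act g ` {act k \<sigma> | k \<sigma>. k \<in> K \<and> k \<in> carrier G \<and> \<sigma> \<in> \<Sigma>}
          = {act s \<sigma> | s \<sigma>. s \<in> (\<otimes>\<^bsub>G\<^esub>) g ` K \<and> s \<in> carrier G \<and> \<sigma> \<in> \<Sigma>}"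
  proof (intro equalityI subsetI)
    fix x assume "x \<in> act g ` {act k \<sigma> | k \<sigma>. k \<in> K \<and> k \<in> carrier G \<and> \<sigma> \<in> \<Sigma>}"
    then obtain k \<sigma> where "k \<in> K" "\<sigma> \<in> \<Sigma>" "x = act g (act k \<sigma>)"
      by blast
    moreover from this have "x = act (g \<otimes>\<^bsub>G\<^esub> k) \<sigma>"
      using assms by (auto simp: group_ring_module_def)
    moreover have "g \<otimes>\<^bsub>G\<^esub> k \<in> carrier G"
      using assms \<open>k \<in> K\<close> by (auto intro: monoid.m_closed)
    ultimately show "x \<in> {act s \<sigma> | s \<sigma>. s \<in> (\<otimes>\<^bsub>G\<^esub>) g ` K \<and> s \<in> carrier G \<and> \<sigma> \<in> \<Sigma>}"
      by blast
  next
    fix x assume "x \<in> {act s \<sigma> | s \<sigma>. s \<in> (\<otimes>\<^bsub>G\<^esub>) g ` K \<and> s \<in> carrier G \<and> \<sigma> \<in> \<Sigma>}"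
    then obtain k \<sigma> where "k \<in> K" "\<sigma> \<in> \<Sigma>" "x = act (g \<otimes>\<^bsub>G\<^esub> k) \<sigma>"
      by blast
    moreover from this have "x = act g (act k \<sigma>)"
      using assms by (auto simp: group_ring_module_def)
    ultimately show "x \<in> act g ` {act k \<sigma> | k \<sigma>. k \<in> K \<and> k \<in> carrier G \<and> \<sigma> \<in> \<Sigma>}"
      using assms(4) by blast
  qed
  then show ?thesis
    unfolding std_filtration_def by (simp add: span_image[symmetric])
qed

lemma module_hom_image_std_filtration_subset:
  assumes "module_hom scale scale' f" "module.subspace scale' V"
    and "\<And>s \<sigma>. s \<in> S \<Longrightarrow> s \<in> carrier G \<Longrightarrow> \<sigma> \<in> \<Sigma> \<Longrightarrow> f (act s \<sigma>) \<in> V"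
  shows "f ` std_filtration G scale act \<Sigma> S \<subseteq> V"
proof -
  interpret module_hom scale scale' f by fact
  have "m2.span (f ` {act s \<sigma> | s \<sigma>. s \<in> S \<and> s \<in> carrier G \<and> \<sigma> \<in> \<Sigma>}) \<subseteq> V"
    using assms(2,3) by (intro m2.span_minimal) auto
  then show ?thesis
    unfolding std_filtration_def by (simp add: span_image)
qed

lemma group_ring_hom_image_std_filtration:
  assumes "monoid G" "group_ring_module G scale act" "group_ring_module G scale' act'"
    and "group_ring_hom G scale act scale' act' f"
    and "K \<subseteq> carrier G" "f ` \<Sigma> \<subseteq> std_filtration G scale' act' \<Sigma>' K"
  shows "f ` std_filtration G scale act \<Sigma> S
           \<subseteq> std_filtration G scale' act' \<Sigma>' (\<Union>s\<in>S \<inter> carrier G. (\<otimes>\<^bsub>G\<^esub>) s ` K)"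
proof (rule module_hom_image_std_filtration_subset)
  show "module_hom scale scale' f"
    using assms(2-4) by (rule group_ring_hom_module_hom)
  show "module.subspace scale' (std_filtration G scale' act' \<Sigma>' (\<Union>s\<in>S \<inter> carrier G. (\<otimes>\<^bsub>G\<^esub>) s ` K))"
    using assms(3) by (intro std_filtration_subspace group_ring_module_module)
  fix s \<sigma> assume s: "s \<in> S" "s \<in> carrier G" and "\<sigma> \<in> \<Sigma>"
  then have "f (act s \<sigma>) = act' s (f \<sigma>)"
    using assms(4) by (simp add: group_ring_hom_def)
  also have "\<dots> \<in> act' s ` std_filtration G scale' act' \<Sigma>' K"
    using assms(6) \<open>\<sigma> \<in> \<Sigma>\<close> by blast
  also have "\<dots> = std_filtration G scale' act' \<Sigma>' ((\<otimes>\<^bsub>G\<^esub>) s ` K)"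
    using assms(1,3) s(2) assms(5) by (rule act_std_filtration)
  also have "\<dots> \<subseteq> std_filtration G scale' act' \<Sigma>' (\<Union>s\<in>S \<inter> carrier G. (\<otimes>\<^bsub>G\<^esub>) s ` K)"
    using assms(3) s by (intro std_filtration_mono group_ring_module_module) auto
  finally show "f (act s \<sigma>) \<in> \<dots>" .
qed

lemma word_dist_mult_right:
  assumes "group G" "s \<in> carrier G" "g \<in> carrier G"
  shows "word_dist G A s (s \<otimes>\<^bsub>G\<^esub> g) = word_length G A g"
proof -
  interpret group G by fact
  have "inv\<^bsub>G\<^esub> s \<otimes>\<^bsub>G\<^esub> (s \<otimes>\<^bsub>G\<^esub> g) = g"
    using assms(2,3) by (simp add: m_assoc[symmetric])
  then show ?thesis by (simp add: word_dist_def)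
qed

lemma translates_subset_enlarge:
  assumes "group G" "K \<subseteq> carrier G" "\<And>k. k \<in> K \<Longrightarrow> real (word_length G A k) \<le> b"
  shows "(\<Union>s\<in>S \<inter> carrier G. (\<otimes>\<^bsub>G\<^esub>) s ` K) \<subseteq> enlarge G A S b"
proof clarify
  fix s k assume s: "s \<in> S" "s \<in> carrier G" and "k \<in> K"
  then have k: "k \<in> carrier G"
    using assms(2) by blast
  have "real (word_dist G A s (s \<otimes>\<^bsub>G\<^esub> k)) \<le> b"
    using word_dist_mult_right[OF assms(1) s(2) k] assms(3)[OF \<open>k \<in> K\<close>] by simp
  moreover have "s \<otimes>\<^bsub>G\<^esub> k \<in> carrier G"
    using s(2) k by (simp add: group.is_monoid[OF assms(1)] monoid.m_closed)
  ultimately show "s \<otimes>\<^bsub>G\<^esub> k \<in> enlarge G A S b"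
    using s(1) unfolding enlarge_def by blast
qed

theorem lemma2p4:
  fixes G :: "('g, 'b) monoid_scheme" and A :: "'g set"
    and scale :: "'r::comm_ring_1 \<Rightarrow> 'm::ab_group_add \<Rightarrow> 'm" and act :: "'g \<Rightarrow> 'm \<Rightarrow> 'm"
    and scale' :: "'r \<Rightarrow> 'n::ab_group_add \<Rightarrow> 'n" and act' :: "'g \<Rightarrow> 'n \<Rightarrow> 'n"
    and \<phi> :: "'m \<Rightarrow> 'n" and \<Sigma>F :: "'m set" and \<Sigma>F' :: "'n set"
  assumes "noetherian_ring TYPE('r)"
    and "group G" and "finite A" and "A \<subseteq> carrier G" and "generate G A = carrier G"
    and "group_ring_module G scale act" and "group_ring_module G scale' act'"
    and "group_ring_hom G scale act scale' act' \<phi>"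
    and "finite \<Sigma>F" and "std_filtration G scale act \<Sigma>F (carrier G) = UNIV"
    and "finite \<Sigma>F'" and "std_filtration G scale' act' \<Sigma>F' (carrier G) = UNIV"
  shows "boundedly_controlled G A (std_filtration G scale act \<Sigma>F)
           (std_filtration G scale' act' \<Sigma>F') \<phi>"
proof -
  obtain K where K: "finite K" "K \<subseteq> carrier G"
      "\<phi> ` \<Sigma>F \<subseteq> std_filtration G scale' act' \<Sigma>F' K"
    using group_ring_module_module[OF assms(7)] assms(12) finite_imageI[OF assms(9)]
    by (rule std_filtration_finite_support)
  define b where "b = real (Max (insert 0 (word_length G A ` K)))"
  have b: "real (word_length G A k) \<le> b" if "k \<in> K" for k
    using K(1) that by (simp add: b_def)
  have bound: "\<phi> ` std_filtration G scale act \<Sigma>F S \<subseteq> std_filtration G scale' act' \<Sigma>F' (enlarge G A S b)"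
    for S
  proof -
    have "\<phi> ` std_filtration G scale act \<Sigma>F S
            \<subseteq> std_filtration G scale' act' \<Sigma>F' (\<Union>s\<in>S \<inter> carrier G. (\<otimes>\<^bsub>G\<^esub>) s ` K)"
      using group.is_monoid[OF assms(2)] assms(6-8) K(2,3) by (rule group_ring_hom_image_std_filtration)
    also have "\<dots> \<subseteq> std_filtration G scale' act' \<Sigma>F' (enlarge G A S b)"
      using group_ring_module_module[OF assms(7)] translates_subset_enlarge[OF assms(2) K(2) b]
      by (rule std_filtration_mono)
    finally show ?thesis .
  qed
  show ?thesis
    unfolding boundedly_controlled_def using bound by (intro exI[of _ b]) (simp add: b_def)
qed

end
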